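(* Let $\sigma$ be a symmetry of a pseudo-Boolean formula with support $\{x_{i_1},\dots,x_{i_k}\}$, $i_1<\dots<i_k$, and write $p_j=x_{i_j}$, $q_j=\sigma(x_{i_j})$. From the circuit constraints for $\sigma$ (defined below) together with $t_k\ge1$, the symmetry-breaking clauses $s_1+\bar p_1\ge1$; $s_{j+1}+\bar s_j+\bar p_{j+1}\ge1$ ($1\le j\le k-2$); $s_1+q_1\ge1$; $s_{j+1}+\bar s_j+q_{j+1}\ge1$ ($1\le j\le k-2$); $q_1+\bar p_1\ge1$; $\bar s_j+q_{j+1}+\bar p_{j+1}\ge1$ ($1\le j\le k-1$) can be derived using $O(k)$ RUP steps and cutting planes steps.
   Context: Literals are $x$ or $\bar x=1-x$; PB constraints $\sum_i c_i\ell_i\ge A$; $\neg(\sum c_i\ell_i\ge A)\doteq\sum c_i\bar\ell_i\ge\sum c_i-A+1$. A symmetry $\sigma$ of a formula $F$ is a permutation of literals with $\sigma(\bar\ell)=\overline{\sigma(\ell)}$ and finite support $\{x:\sigma(x)\ne x\}$ such that applying $\sigma$ to $F$ yields $F$ syntactically. Circuit constraints for $\sigma$ (fresh variables $s_1..s_{k-1}$, $t_1..t_k$): $\bar s_1+p_1+\bar q_1\ge1$; $2s_1+\bar p_1+q_1\ge2$; for $1\le j\le k-2$: $3\bar s_{j+1}+2s_j+p_{j+1}+\bar q_{j+1}\ge3$, $2s_{j+1}+2\bar s_j+\bar p_{j+1}+q_{j+1}\ge2$; $\bar t_1+q_1+\bar p_1\ge1$; $2t_1+\bar q_1+p_1\ge2$;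 for $1\le j\le k-1$: $4\bar t_{j+1}+3t_j+\bar s_j+q_{j+1}+\bar p_{j+1}\ge4$, $3t_{j+1}+3\bar t_j+s_j+\bar q_{j+1}+p_{j+1}\ge3$. A cutting planes step derives a new constraint from a bounded number of available constraints and literal axioms using addition, positive multiplication, division with rounding up, saturation ($\sum c_i\ell_i\ge A\mapsto\sum\min(c_i,A)\ell_i\ge A$) and weakening. A RUP step derives $D$ if unit propagation on the available constraints together with $\neg D$ reaches a conflict (unit propagation: a constraint with negative slack $\sum_{i:\rho(\ell_i)\ne0}c_i-A$ under partial assignment $\rho$ is a conflict; an unassigned literal whose coefficient exceeds the slack is set to true). *)

theory Defs
  imports Main
begin

datatype 'v lit = Pos 'v | Neg 'v

fun neg_lit :: "'v lit \<Rightarrow> 'v lit" where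
  "neg_lit (Pos v) = Neg v" | "neg_lit (Neg v) = Pos v"

fun map_lit :: "('v \<Rightarrow> 'w) \<Rightarrow> 'v lit \<Rightarrow> 'w lit" where
  "map_lit f (Pos v) = Pos (f v)" | "map_lit f (Neg v) = Neg (f v)"

text \<open>A PB constraint is stored canonically as a linear inequality
  \<open>\<Sum>_v a v * x_v \<ge> B\<close> over the 0/1 variables (with \<open>\<bar>x\<close> read as \<open>1 - x\<close>).
  This representation is unique, so "syntactic equality" of constraints
  (after the usual normalisation \<open>c x + d \<bar>x = ...\<close>) is plain equality.\<close>
type_synonym 'v pbc = "('v \<Rightarrow> int) \<times> int"

definition supp :: "'v pbc \<Rightarrow> 'v set" where
  "supp C = {v. fst C v \<noteq> 0}"

definition lits :: "'v set \<Rightarrow> 'v lit set" where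
  "lits S = Pos ` S \<union> Neg ` S"

fun lit_sign :: "'v lit \<Rightarrow> 'v \<Rightarrow> int" where
  "lit_sign (Pos u) v = (if u = v then 1 else 0)"
| "lit_sign (Neg u) v = (if u = v then -1 else 0)"

fun neg_part :: "int \<Rightarrow> 'v lit \<Rightarrow> int" where
  "neg_part c (Pos u) = 0" | "neg_part c (Neg u) = c"

definition mk_pbc :: "(int \<times> 'v lit) list \<Rightarrow> int \<Rightarrow> 'v pbc" where
  "mk_pbc ts A = ((\<lambda>v. sum_list (map (\<lambda>(c, l). c * lit_sign l v) ts)),
                  A - sum_list (map (\<lambda>(c, l). neg_part c l) ts))"

fun ncoef :: "'v pbc \<Rightarrow> 'v lit \<Rightarrow> int" where
  "ncoef C (Pos v) = max 0 (fst C v)"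
| "ncoef C (Neg v) = max 0 (- fst C v)"

definition ndeg :: "'v pbc \<Rightarrow> int" where
  "ndeg C = snd C + (\<Sum>v\<in>supp C. max 0 (- fst C v))"

text \<open>Negation: \<open>\<not>(\<Sum> c_i \<ell>_i \<ge> A) = \<Sum> c_i \<bar>\<ell>_i \<ge> \<Sum> c_i - A + 1\<close>, i.e.
  \<open>\<Sum> a_v x_v \<le> B - 1\<close>.\<close>
definition pb_neg :: "'v pbc \<Rightarrow> 'v pbc" where
  "pb_neg C = ((\<lambda>v. - fst C v), 1 - snd C)"

definition lit_axiom :: "'v lit \<Rightarrow> 'v pbc" where
  "lit_axiom l = mk_pbc [(1, l)] 0"

definition pb_add :: "'v pbc \<Rightarrow> 'v pbc \<Rightarrow> 'v pbc" where
  "pb_add C D = ((\<lambda>v. fst C v + fst D v), snd C + snd D)"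

definition pb_mult :: "int \<Rightarrow> 'v pbc \<Rightarrow> 'v pbc" where
  "pb_mult c C = ((\<lambda>v. c * fst C v), c * snd C)"

definition cdiv :: "int \<Rightarrow> int \<Rightarrow> int" where
  "cdiv a d = - ((- a) div d)"   \<comment> \<open>\<open>\<lceil>a/d\<rceil>\<close> for \<open>d > 0\<close>\<close>

definition pb_div :: "int \<Rightarrow> 'v pbc \<Rightarrow> 'v pbc" where
  "pb_div d C = (let a' = (\<lambda>v. sgn (fst C v) * cdiv \<bar>fst C v\<bar> d) in
     (a', cdiv (ndeg C) d - (\<Sum>v\<in>supp C. max 0 (- a' v))))"

definition pb_sat :: "'v pbc \<Rightarrow> 'v pbc" where
  "pb_sat C = (let A = ndeg C; a' = (\<lambda>v. sgn (fst C v) * min \<bar>fst C v\<bar> (max 0 A)) in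
     (a', A - (\<Sum>v\<in>supp C. max 0 (- a' v))))"

definition pb_weaken :: "'v \<Rightarrow> 'v pbc \<Rightarrow> 'v pbc" where
  "pb_weaken v C = ((fst C)(v := 0), snd C - max 0 (fst C v))"

definition cp_step :: "'v pbc set \<Rightarrow> 'v pbc \<Rightarrow> bool" where
  "cp_step \<Gamma> C \<longleftrightarrow> (let G = \<Gamma> \<union> range lit_axiom in
     (\<exists>C1\<in>G. \<exists>C2\<in>G. C = pb_add C1 C2)
   \<or> (\<exists>C1\<in>G. \<exists>c>0. C = pb_mult c C1)
   \<or> (\<exists>C1\<in>G. \<exists>d>0. C = pb_div d C1)
   \<or> (\<exists>C1\<in>G. C = pb_sat C1)
   \<or> (\<exists>C1\<in>G. \<exists>v. C = pb_weaken v C1))"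

type_synonym 'v pasg = "'v \<Rightarrow> bool option"

fun lit_val :: "'v pasg \<Rightarrow> 'v lit \<Rightarrow> bool option" where
  "lit_val \<rho> (Pos v) = \<rho> v"
| "lit_val \<rho> (Neg v) = map_option Not (\<rho> v)"

fun assign_lit :: "'v pasg \<Rightarrow> 'v lit \<Rightarrow> 'v pasg" where
  "assign_lit \<rho> (Pos v) = \<rho>(v := Some True)"
| "assign_lit \<rho> (Neg v) = \<rho>(v := Some False)"

definition slack :: "'v pbc \<Rightarrow> 'v pasg \<Rightarrow> int" where
  "slack C \<rho> = (\<Sum>l\<in>{l \<in> lits (supp C). lit_val \<rho> l \<noteq> Some False}. ncoef C l) - ndeg C"

inductive up_reach :: "'v pbc set \<Rightarrow> 'v pasg \<Rightarrow> bool" for \<Gamma> where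
  up_empty: "up_reach \<Gamma> (\<lambda>_. None)"
| up_prop: "\<lbrakk> up_reach \<Gamma> \<rho>; C \<in> \<Gamma>; lit_val \<rho> l = None; ncoef C l > slack C \<rho> \<rbrakk>
            \<Longrightarrow> up_reach \<Gamma> (assign_lit \<rho> l)"

definition up_conflict :: "'v pbc set \<Rightarrow> bool" where
  "up_conflict \<Gamma> \<longleftrightarrow> (\<exists>\<rho>. up_reach \<Gamma> \<rho> \<and> (\<exists>C\<in>\<Gamma>. slack C \<rho> < 0))"

definition rup_step :: "'v pbc set \<Rightarrow> 'v pbc \<Rightarrow> bool" where
  "rup_step \<Gamma> D \<longleftrightarrow> finite (supp D) \<and> up_conflict (insert (pb_neg D) \<Gamma>)"

definition valid_deriv :: "'v pbc set \<Rightarrow> 'v pbc list \<Rightarrow> bool" where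
  "valid_deriv P Ds \<longleftrightarrow> (\<forall>i < length Ds.
     rup_step (P \<union> set (take i Ds)) (Ds ! i) \<or> cp_step (P \<union> set (take i Ds)) (Ds ! i))"

definition apply_lits :: "('v lit \<Rightarrow> 'w lit) \<Rightarrow> 'v pbc \<Rightarrow> 'w pbc" where
  "apply_lits \<sigma> C =
     ((\<lambda>w. \<Sum>l\<in>lits (supp C). ncoef C l * lit_sign (\<sigma> l) w),
      ndeg C - (\<Sum>l\<in>lits (supp C). neg_part (ncoef C l) (\<sigma> l)))"

definition sym_support :: "('v lit \<Rightarrow> 'v lit) \<Rightarrow> 'v set" where
  "sym_support \<sigma> = {x. \<sigma> (Pos x) \<noteq> Pos x}"

definition pb_formula :: "'v pbc set \<Rightarrow> bool" where
  "pb_formula F \<longleftrightarrow> finite F \<and> (\<forall>C\<in>F. finite (supp C))"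

definition is_symmetry :: "('v lit \<Rightarrow> 'v lit) \<Rightarrow> 'v pbc set \<Rightarrow> bool" where
  "is_symmetry \<sigma> F \<longleftrightarrow> bij \<sigma> \<and> (\<forall>l. \<sigma> (neg_lit l) = neg_lit (\<sigma> l))
     \<and> finite (sym_support \<sigma>) \<and> apply_lits \<sigma> ` F = F"

text \<open>Formula variables are \<open>X i\<close>; the fresh variables are \<open>S j\<close> and \<open>T j\<close>.\<close>
datatype var = X nat | S nat | T nat

definition circuit_constraints :: "nat \<Rightarrow> (nat \<Rightarrow> var lit) \<Rightarrow> (nat \<Rightarrow> var lit) \<Rightarrow> var pbc set" where
  "circuit_constraints k p q =
     {mk_pbc [(1, Neg (S 1)), (1, p 1), (1, neg_lit (q 1))] 1,
      mk_pbc [(2, Pos (S 1)), (1, neg_lit (p 1)), (1, q 1)] 2}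
   \<union> (\<Union>j\<in>{1..k-2}.
       {mk_pbc [(3, Neg (S (j+1))), (2, Pos (S j)), (1, p (j+1)), (1, neg_lit (q (j+1)))] 3,
        mk_pbc [(2, Pos (S (j+1))), (2, Neg (S j)), (1, neg_lit (p (j+1))), (1, q (j+1))] 2})
   \<union> {mk_pbc [(1, Neg (T 1)), (1, q 1), (1, neg_lit (p 1))] 1,
      mk_pbc [(2, Pos (T 1)), (1, neg_lit (q 1)), (1, p 1)] 2}
   \<union> (\<Union>j\<in>{1..k-1}.
       {mk_pbc [(4, Neg (T (j+1))), (3, Pos (T j)), (1, Neg (S j)), (1, q (j+1)), (1, neg_lit (p (j+1)))] 4,
        mk_pbc [(3, Pos (T (j+1))), (3, Neg (T j)), (1, Pos (S j)), (1, neg_lit (q (j+1))), (1, p (j+1))] 3})"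

definition sb_clauses :: "nat \<Rightarrow> (nat \<Rightarrow> var lit) \<Rightarrow> (nat \<Rightarrow> var lit) \<Rightarrow> var pbc set" where
  "sb_clauses k p q =
     {mk_pbc [(1, Pos (S 1)), (1, neg_lit (p 1))] 1}
   \<union> (\<Union>j\<in>{1..k-2}. {mk_pbc [(1, Pos (S (j+1))), (1, Neg (S j)), (1, neg_lit (p (j+1)))] 1})
   \<union> {mk_pbc [(1, Pos (S 1)), (1, q 1)] 1}
   \<union> (\<Union>j\<in>{1..k-2}. {mk_pbc [(1, Pos (S (j+1))), (1, Neg (S j)), (1, q (j+1))] 1})
   \<union> {mk_pbc [(1, q 1), (1, neg_lit (p 1))] 1}
   \<union> (\<Union>j\<in>{1..k-1}. {mk_pbc [(1, Neg (S j)), (1, q (j+1)), (1, neg_lit (p (j+1)))] 1})"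

end

theory Submission
  imports Defs "HOL-Library.Multiset"
begin

(*
  The clauses containing s_{j+1} come from the circuit constraint
  2 s_{j+1} + 2 ~s_j + ~p_{j+1} + q_{j+1} >= 2: cancelling one of the two formula
  literals against a literal axiom leaves degree 1, and dividing by 2 turns the
  result into the clause with the other one.  The clauses ~s_j + q_{j+1} + ~p_{j+1} >= 1
  come from walking down the t-chain, starting from the premise t_k >= 1: the unit
  t_{j+1} >= 1 removes the term 4 ~t_{j+1} from the first t-constraint of level j,
  leaving E_j = 3 t_j + ~s_j + q_{j+1} + ~p_{j+1} >= 4.  Cancelling 3 t_j from E_j
  gives the clause, while cancelling the three other literals and dividing by 3
  gives the unit t_j >= 1 for the next level down.  Finally t_1 >= 1 turns
  ~t_1 + q_1 + ~p_1 >= 1 into q_1 + ~p_1 >= 1.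
*)

fun lit_var :: "'v lit \<Rightarrow> 'v" where
  "lit_var (Pos v) = v"
| "lit_var (Neg v) = v"

lemma neg_lit_neg_lit [simp]: "neg_lit (neg_lit l) = l"
  by (cases l) simp_all

lemma lit_var_neg_lit [simp]: "lit_var (neg_lit l) = lit_var l"
  by (cases l) simp_all

lemma lit_var_map_lit [simp]: "lit_var (map_lit f l) = f (lit_var l)"
  by (cases l) simp_all

lemma lit_sign_neg_lit [simp]: "lit_sign (neg_lit l) v = - lit_sign l v"
  by (cases l) simp_all

lemma neg_part_add_neg_lit: "neg_part c (neg_lit l) + neg_part c l = c"
  by (cases l) simp_all

lemma neg_part_mult: "neg_part (c * d) l = c * neg_part d l"
  by (cases l) simp_all

lemma lit_sign_eq_0: "lit_var l \<noteq> v \<Longrightarrow> lit_sign l v = 0"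
  by (cases l) simp_all

lemma mk_pbc_mset_eq:
  assumes "mset ts = mset us"
  shows "mk_pbc ts A = mk_pbc us A"
proof -
  have sum_list_mset: "sum_list (map f xs) = sum_mset (image_mset f (mset xs))"
    for f :: "int \<times> 'v lit \<Rightarrow> int" and xs
    by (metis mset_map sum_mset_sum_list)
  show ?thesis
    unfolding mk_pbc_def sum_list_mset assms ..
qed

lemma pb_add_mk_pbc: "pb_add (mk_pbc ts A) (mk_pbc us B) = mk_pbc (ts @ us) (A + B)"
  by (simp add: pb_add_def mk_pbc_def fun_eq_iff)

lemma pb_mult_mk_pbc: "pb_mult c (mk_pbc ts A) = mk_pbc (map (\<lambda>(d, l). (c * d, l)) ts) (c * A)"
  by (induction ts)
    (auto simp: pb_mult_def mk_pbc_def fun_eq_iff ring_distribs mult.left_commute neg_part_mult)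

lemma mk_pbc_cancel: "mk_pbc ((c, neg_lit l) # ts @ [(c, l)]) A = mk_pbc ts (A - c)"
  using neg_part_add_neg_lit[of c l] by (simp add: mk_pbc_def fun_eq_iff algebra_simps)

lemma fst_mk_pbc_fresh: "v \<notin> lit_var ` snd ` set ts \<Longrightarrow> fst (mk_pbc ts A) v = 0"
  by (induction ts) (auto simp: mk_pbc_def lit_sign_eq_0)

lemma fst_mk_pbc_distinct:
  assumes "distinct (map (lit_var \<circ> snd) ts)" "(c, l) \<in> set ts"
  shows "fst (mk_pbc ts A) (lit_var l) = c * lit_sign l (lit_var l)"
  using assms
proof (induction ts)
  case (Cons t ts)
  show ?case
  proof (cases "t = (c, l)")
    case True
    with Cons.prems have "lit_var l \<notin> lit_var ` snd ` set ts" by force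
    with True show ?thesis using fst_mk_pbc_fresh[of "lit_var l" ts A] by (simp add: mk_pbc_def)
  next
    case False
    with Cons.prems have "(c, l) \<in> set ts" "lit_var (snd t) \<noteq> lit_var l" by force+
    with Cons show ?thesis
      by (cases t) (simp add: mk_pbc_def lit_sign_eq_0)
  qed
qed simp

lemma lit_sign_lit_var: "lit_sign l (lit_var l) = 1 \<or> lit_sign l (lit_var l) = -1"
  by (cases l) simp_all

lemma max_0_neg_lit_coeff: "0 \<le> c \<Longrightarrow> max 0 (- (c * lit_sign l (lit_var l))) = neg_part c l"
  by (cases l) simp_all

lemma supp_mk_pbc:
  assumes "distinct (map (lit_var \<circ> snd) ts)" "\<forall>(c, l) \<in> set ts. c \<noteq> 0"
  shows "supp (mk_pbc ts A) = lit_var ` snd ` set ts"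
proof
  show "supp (mk_pbc ts A) \<subseteq> lit_var ` snd ` set ts"
    using fst_mk_pbc_fresh by (fastforce simp: supp_def)
  show "lit_var ` snd ` set ts \<subseteq> supp (mk_pbc ts A)"
  proof
    fix v assume "v \<in> lit_var ` snd ` set ts"
    then obtain c l where "(c, l) \<in> set ts" "v = lit_var l" by force
    with assms show "v \<in> supp (mk_pbc ts A)"
      using fst_mk_pbc_distinct lit_sign_lit_var[of l] by (fastforce simp: supp_def)
  qed
qed

lemma neg_coeff_sum_mk_pbc:
  assumes "distinct (map (lit_var \<circ> snd) ts)" "\<forall>(c, l) \<in> set ts. 0 < c"
  shows "(\<Sum>v\<in>supp (mk_pbc ts A). max 0 (- fst (mk_pbc ts A) v))
    = (\<Sum>(c, l)\<leftarrow>ts. neg_part c l)"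
proof -
  have "\<forall>(c, l) \<in> set ts. c \<noteq> 0" using assms(2) by auto
  then have "supp (mk_pbc ts A) = set (map (lit_var \<circ> snd) ts)"
    by (simp add: supp_mk_pbc[OF assms(1)] image_comp)
  then have "(\<Sum>v\<in>supp (mk_pbc ts A). max 0 (- fst (mk_pbc ts A) v))
      = (\<Sum>t\<leftarrow>ts. max 0 (- fst (mk_pbc ts A) (lit_var (snd t))))"
    using sum_list_distinct_conv_sum_set[OF assms(1), of "\<lambda>v. max 0 (- fst (mk_pbc ts A) v)"]
    by (simp add: comp_def)
  also have "\<dots> = (\<Sum>(c, l)\<leftarrow>ts. neg_part c l)"
    using assms by (intro arg_cong[where f = sum_list] map_cong)
      (auto simp: fst_mk_pbc_distinct max_0_neg_lit_coeff case_prod_unfold)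
  finally show ?thesis .
qed

lemma ndeg_mk_pbc:
  assumes "distinct (map (lit_var \<circ> snd) ts)" "\<forall>(c, l) \<in> set ts. 0 < c"
  shows "ndeg (mk_pbc ts A) = A"
  using neg_coeff_sum_mk_pbc[OF assms] by (simp add: ndeg_def mk_pbc_def)

lemma cdiv_pos: "0 < c \<Longrightarrow> 0 < d \<Longrightarrow> 0 < cdiv c d"
  by (simp add: cdiv_def pos_imp_zdiv_neg_iff)

lemma pb_div_mk_pbc:
  assumes dist: "distinct (map (lit_var \<circ> snd) ts)" and pos: "\<forall>(c, l) \<in> set ts. 0 < c"
    and "0 < d"
  shows "pb_div d (mk_pbc ts A) = mk_pbc (map (\<lambda>(c, l). (cdiv c d, l)) ts) (cdiv A d)"
    (is "_ = mk_pbc ?ts' _")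
proof -
  have vars: "lit_var ` snd ` set ?ts' = lit_var ` snd ` set ts"
    by (simp add: image_image case_prod_unfold)
  have dist': "distinct (map (lit_var \<circ> snd) ?ts')"
    using dist by (simp add: comp_def case_prod_unfold)
  have pos': "\<forall>(c, l) \<in> set ?ts'. 0 < c"
    using pos cdiv_pos[OF _ \<open>0 < d\<close>] by auto
  have coeffs: "(\<lambda>v. sgn (fst (mk_pbc ts A) v) * cdiv \<bar>fst (mk_pbc ts A) v\<bar> d)
      = fst (mk_pbc ?ts' (cdiv A d))"
  proof
    fix v
    show "sgn (fst (mk_pbc ts A) v) * cdiv \<bar>fst (mk_pbc ts A) v\<bar> d = fst (mk_pbc ?ts' (cdiv A d)) v"
    proof (cases "v \<in> lit_var ` snd ` set ts")
      case True
      then obtain c l where cl: "(c, l) \<in> set ts" and v: "v = lit_var l" by force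
      then have "(cdiv c d, l) \<in> set ?ts'" by force
      from fst_mk_pbc_distinct[OF dist' this] fst_mk_pbc_distinct[OF dist cl] pos cl v
      show ?thesis using lit_sign_lit_var[of l] by (auto simp: sgn_mult)
    next
      case False
      with vars show ?thesis by (simp add: fst_mk_pbc_fresh)
    qed
  qed
  have "\<forall>(c, l) \<in> set ts. c \<noteq> 0" "\<forall>(c, l) \<in> set ?ts'. c \<noteq> 0"
    using pos pos' by auto
  then have "supp (mk_pbc ts A) = supp (mk_pbc ?ts' (cdiv A d))"
    using supp_mk_pbc[OF dist] supp_mk_pbc[OF dist'] vars by metis
  then show ?thesis
    unfolding pb_div_def Let_def coeffs ndeg_mk_pbc[OF dist pos]
    using neg_coeff_sum_mk_pbc[OF dist' pos', of "cdiv A d"] by (simp add: mk_pbc_def)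
qed

lemma up_reach_mono: "up_reach \<Gamma> \<rho> \<Longrightarrow> \<Gamma> \<subseteq> \<Gamma>' \<Longrightarrow> up_reach \<Gamma>' \<rho>"
proof (induction rule: up_reach.induct)
  case up_empty
  show ?case by (rule up_reach.up_empty)
next
  case (up_prop \<rho> C l)
  then show ?case by (meson subsetD up_reach.up_prop)
qed

lemma rup_step_mono:
  assumes "rup_step \<Gamma> D" "\<Gamma> \<subseteq> \<Gamma>'"
  shows "rup_step \<Gamma>' D"
proof -
  have sub: "insert (pb_neg D) \<Gamma> \<subseteq> insert (pb_neg D) \<Gamma>'"
    using assms(2) by blast
  obtain \<rho> C where "up_reach (insert (pb_neg D) \<Gamma>) \<rho>" "C \<in> insert (pb_neg D) \<Gamma>" "slack C \<rho> < 0"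
    using assms(1) unfolding rup_step_def up_conflict_def by blast
  then have "up_conflict (insert (pb_neg D) \<Gamma>')"
    unfolding up_conflict_def using sub up_reach_mono by blast
  then show ?thesis
    using assms(1) unfolding rup_step_def by blast
qed

lemma cp_step_mono:
  assumes "cp_step \<Gamma> C" "\<Gamma> \<subseteq> \<Gamma>'"
  shows "cp_step \<Gamma>' C"
proof -
  have sub: "\<Gamma> \<union> range lit_axiom \<subseteq> \<Gamma>' \<union> range lit_axiom"
    using assms(2) by blast
  show ?thesis
    using assms(1) unfolding cp_step_def Let_def
    by (elim disjE; use sub in \<open>meson subsetD\<close>)
qed

lemma valid_deriv_mono:
  assumes "valid_deriv P Ds" "P \<subseteq> P'"
  shows "valid_deriv P' Ds"
  unfolding valid_deriv_def
proof (intro allI impI)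
  fix i assume "i < length Ds"
  moreover have "P \<union> set (take i Ds) \<subseteq> P' \<union> set (take i Ds)"
    using assms(2) by blast
  ultimately show "rup_step (P' \<union> set (take i Ds)) (Ds ! i)
      \<or> cp_step (P' \<union> set (take i Ds)) (Ds ! i)"
    using assms(1) rup_step_mono cp_step_mono unfolding valid_deriv_def by blast
qed

lemma valid_deriv_append:
  "valid_deriv P (Ds @ Es) \<longleftrightarrow> valid_deriv P Ds \<and> valid_deriv (P \<union> set Ds) Es"
proof -
  have split: "(\<forall>i < length (Ds @ Es). R i) \<longleftrightarrow>
      (\<forall>i < length Ds. R i) \<and> (\<forall>i < length Es. R (length Ds + i))" for R
    by (auto, metis add_diff_inverse_nat nat_add_left_cancel_less)
  show ?thesis
    unfolding valid_deriv_def split by (simp add: nth_append take_append Un_assoc)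
qed

definition derivable_in :: "'v pbc set \<Rightarrow> nat \<Rightarrow> 'v pbc set \<Rightarrow> bool" where
  "derivable_in P n Cs \<longleftrightarrow> (\<exists>Ds. valid_deriv P Ds \<and> length Ds \<le> n \<and> Cs \<subseteq> P \<union> set Ds)"

lemma derivable_in_premises: "Cs \<subseteq> P \<Longrightarrow> derivable_in P n Cs"
  unfolding derivable_in_def by (rule exI[of _ "[]"]) (simp add: valid_deriv_def)

lemma derivable_in_cp_step: "cp_step P C \<Longrightarrow> derivable_in P 1 {C}"
  unfolding derivable_in_def by (rule exI[of _ "[C]"]) (simp add: valid_deriv_def)

lemma derivable_in_mono:
  assumes "derivable_in P m Cs" "P \<subseteq> P'" "m \<le> n" "Cs' \<subseteq> Cs"
  shows "derivable_in P' n Cs'"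
proof -
  obtain Ds where "valid_deriv P Ds" "length Ds \<le> m" "Cs \<subseteq> P \<union> set Ds"
    using assms(1) unfolding derivable_in_def by blast
  with assms(2-4) show ?thesis
    unfolding derivable_in_def by (intro exI[of _ Ds]) (auto intro: valid_deriv_mono)
qed

lemma derivable_in_trans:
  assumes "derivable_in P m Cs" "derivable_in (P \<union> Cs) n Cs'"
  shows "derivable_in P (m + n) (Cs \<union> Cs')"
proof -
  obtain Ds where Ds: "valid_deriv P Ds" "length Ds \<le> m" "Cs \<subseteq> P \<union> set Ds"
    using assms(1) derivable_in_def by blast
  obtain Es where Es: "valid_deriv (P \<union> Cs) Es" "length Es \<le> n" "Cs' \<subseteq> P \<union> Cs \<union> set Es"
    using assms(2) derivable_in_def by blast
  have "valid_deriv (P \<union> set Ds) Es"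
    using Es(1) by (rule valid_deriv_mono) (use Ds(3) in blast)
  with Ds Es show ?thesis
    unfolding derivable_in_def
    by (intro exI[of _ "Ds @ Es"]) (auto simp: valid_deriv_append)
qed

lemma derivable_in_Un:
  assumes "derivable_in P m Cs" "derivable_in P n Cs'"
  shows "derivable_in P (m + n) (Cs \<union> Cs')"
proof -
  have "derivable_in (P \<union> Cs) n Cs'"
    by (rule derivable_in_mono[OF assms(2)]) auto
  then show ?thesis by (rule derivable_in_trans[OF assms(1)])
qed

lemma derivable_in_UN:
  assumes "finite J" "\<And>j. j \<in> J \<Longrightarrow> derivable_in P n (Cs j)"
  shows "derivable_in P (card J * n) (\<Union>j\<in>J. Cs j)"
  using assms
proof (induction J rule: finite_induct)
  case empty
  show ?case by (simp add: derivable_in_premises)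
next
  case (insert j J)
  then show ?case using derivable_in_Un[of P n "Cs j"] by simp
qed

lemma derivable_in_seq:
  assumes "derivable_in P m Cs" "derivable_in (P \<union> Cs) n Cs'"
  shows "derivable_in P (m + n) Cs'"
  using derivable_in_trans[OF assms] by (rule derivable_in_mono) auto

lemma cp_step_add:
  "C1 \<in> G \<union> range lit_axiom \<Longrightarrow> C2 \<in> G \<union> range lit_axiom \<Longrightarrow> cp_step G (pb_add C1 C2)"
  unfolding cp_step_def Let_def by blast

lemma cp_step_mult: "C \<in> G \<union> range lit_axiom \<Longrightarrow> 0 < c \<Longrightarrow> cp_step G (pb_mult c C)"
  unfolding cp_step_def Let_def by blast

lemma cp_step_div: "C \<in> G \<union> range lit_axiom \<Longrightarrow> 0 < d \<Longrightarrow> cp_step G (pb_div d C)"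
  unfolding cp_step_def Let_def by blast

lemma mk_pbc_lit_axiom: "mk_pbc [(1, l)] 0 \<in> G \<union> range lit_axiom"
  by (simp add: lit_axiom_def)

lemma derivable_in_cancel:
  assumes C: "mk_pbc ts A \<in> G" and side: "mk_pbc [(1, l)] B \<in> G \<union> range lit_axiom"
    and ts: "mset ts = add_mset (c, neg_lit l) (mset us)" and "0 < c" and "A' = A + c * B - c"
  shows "derivable_in G 2 {mk_pbc us A'}"
proof -
  let ?M = "mk_pbc [(c, l)] (c * B)"
  have "derivable_in G 1 {?M}"
    using derivable_in_cp_step[OF cp_step_mult[OF side \<open>0 < c\<close>]] by (simp add: pb_mult_mk_pbc)
  moreover have "pb_add (mk_pbc ts A) ?M = mk_pbc us A'"
  proof -
    have "pb_add (mk_pbc ts A) ?M = mk_pbc ((c, neg_lit l) # us @ [(c, l)]) (A + c * B)"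
      unfolding pb_add_mk_pbc by (rule mk_pbc_mset_eq) (simp add: ts)
    then show ?thesis by (simp add: mk_pbc_cancel \<open>A' = A + c * B - c\<close>)
  qed
  then have "derivable_in (G \<union> {?M}) 1 {mk_pbc us A'}"
    using derivable_in_cp_step[OF cp_step_add[of "mk_pbc ts A" "G \<union> {?M}" ?M]] C by simp
  ultimately have "derivable_in G (1 + 1) {mk_pbc us A'}"
    by (rule derivable_in_seq)
  then show ?thesis by (simp add: numeral_2_eq_2)
qed

lemma derivable_in_div:
  assumes "mk_pbc ts A \<in> G" "distinct (map (lit_var \<circ> snd) ts)" "\<forall>(c, l) \<in> set ts. 0 < c"
    and "0 < d"
  shows "derivable_in G 1 {mk_pbc (map (\<lambda>(c, l). (cdiv c d, l)) ts) (cdiv A d)}"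
  using derivable_in_cp_step[OF cp_step_div[of "mk_pbc ts A" G d]] assms
  by (simp add: pb_div_mk_pbc)

lemma derivable_in_halve:
  assumes "mk_pbc (map (Pair 2) ls @ [(1, l), (1, m)]) 2 \<in> G"
    and "distinct (map lit_var (l # ls))"
  shows "derivable_in G 3 {mk_pbc (map (Pair 1) ls @ [(1, l)]) 1}"
proof -
  let ?E = "mk_pbc (map (Pair 2) ls @ [(1, l)]) 1"
  have cancel: "derivable_in G 2 {?E}"
    by (rule derivable_in_cancel[OF assms(1) mk_pbc_lit_axiom, where l = "neg_lit m" and c = 1])
      simp_all
  have halve: "derivable_in (G \<union> {?E}) 1 {mk_pbc (map (Pair 1) ls @ [(1, l)]) 1}"
    using derivable_in_div[of "map (Pair 2) ls @ [(1, l)]" 1 "G \<union> {?E}" 2] assms(2)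
    by (simp add: comp_def cdiv_def)
  from derivable_in_seq[OF cancel halve] show ?thesis
    by simp
qed

lemma derivable_in_halve_pair:
  assumes "mk_pbc (map (Pair 2) ls @ [(1, l), (1, m)]) 2 \<in> G"
    and "distinct (map lit_var (l # ls))" "distinct (map lit_var (m # ls))"
  shows "derivable_in G 6 {mk_pbc (map (Pair 1) ls @ [(1, l)]) 1, mk_pbc (map (Pair 1) ls @ [(1, m)]) 1}"
proof -
  have "mk_pbc (map (Pair 2) ls @ [(1, m), (1, l)]) 2 = mk_pbc (map (Pair 2) ls @ [(1, l), (1, m)]) 2"
    by (rule mk_pbc_mset_eq) simp
  then have "derivable_in G 3 {mk_pbc (map (Pair 1) ls @ [(1, m)]) 1}"
    using derivable_in_halve[of ls m l G] assms by simp
  from derivable_in_Un[OF derivable_in_halve[OF assms(1,2)] this] show ?thesis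
    by (simp add: insert_commute)
qed

lemma derivable_in_t_step:
  assumes unit: "mk_pbc [(1, Pos (T (j + 1)))] 1 \<in> G"
    and circ: "mk_pbc [(4, Neg (T (j + 1))), (3, Pos (T j)), (1, Neg (S j)), (1, q), (1, neg_lit p)] 4 \<in> G"
  shows "derivable_in G 11 {mk_pbc [(1, Pos (T j))] 1, mk_pbc [(1, Neg (S j)), (1, q), (1, neg_lit p)] 1}"
proof -
  let ?E = "mk_pbc [(3, Pos (T j)), (1, Neg (S j)), (1, q), (1, neg_lit p)] 4"
  let ?E1 = "mk_pbc [(3, Pos (T j)), (1, q), (1, neg_lit p)] 3"
  let ?E2 = "mk_pbc [(3, Pos (T j)), (1, neg_lit p)] 2"
  let ?E3 = "mk_pbc [(3, Pos (T j))] 1"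
  let ?H = "G \<union> {?E}"
  have E: "derivable_in G 2 {?E}"
    by (rule derivable_in_cancel[OF circ UnI1[OF unit], where c = 4]) simp_all
  have unit_j: "derivable_in ?H 7 {mk_pbc [(1, Pos (T j))] 1}"
  proof -
    have d1: "derivable_in ?H 2 {?E1}"
      by (rule derivable_in_cancel[OF UnI2[OF singletonI] mk_pbc_lit_axiom, where l = "Pos (S j)" and c = 1])
        simp_all
    have d2: "derivable_in (?H \<union> {?E1}) 2 {?E2}"
      by (rule derivable_in_cancel[OF UnI2[OF singletonI] mk_pbc_lit_axiom, where l = "neg_lit q" and c = 1])
        simp_all
    have d3: "derivable_in (?H \<union> {?E2}) 2 {?E3}"
      by (rule derivable_in_cancel[OF UnI2[OF singletonI] mk_pbc_lit_axiom, where l = p and c = 1])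
        simp_all
    have d4: "derivable_in (?H \<union> {?E3}) 1 {mk_pbc [(1, Pos (T j))] 1}"
      using derivable_in_div[of "[(3, Pos (T j))]" 1 "?H \<union> {?E3}" 3] by (simp add: cdiv_def)
    from derivable_in_seq[OF derivable_in_seq[OF derivable_in_seq[OF d1 d2] d3] d4]
    show ?thesis by simp
  qed
  have clause_j: "derivable_in ?H 2 {mk_pbc [(1, Neg (S j)), (1, q), (1, neg_lit p)] 1}"
    by (rule derivable_in_cancel[OF UnI2[OF singletonI] mk_pbc_lit_axiom, where l = "Neg (T j)" and c = 3])
      simp_all
  from derivable_in_seq[OF E derivable_in_Un[OF unit_j clause_j]] show ?thesis
    by (simp add: insert_commute)
qed

lemma derivable_in_t_chain:
  assumes unit: "mk_pbc [(1, Pos (T k))] 1 \<in> P"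
    and circ: "\<And>j. 1 \<le> j \<Longrightarrow> j < k \<Longrightarrow>
      mk_pbc [(4, Neg (T (j + 1))), (3, Pos (T j)), (1, Neg (S j)), (1, q (j + 1)), (1, neg_lit (p (j + 1)))] 4 \<in> P"
    and "1 \<le> i" "i \<le> k"
  shows "derivable_in P (11 * (k - i)) (insert (mk_pbc [(1, Pos (T i))] 1)
    (\<Union>j\<in>{i..<k}. {mk_pbc [(1, Neg (S j)), (1, q (j + 1)), (1, neg_lit (p (j + 1)))] 1}))"
  using \<open>i \<le> k\<close>
proof (induction rule: inc_induct)
  case base
  show ?case using unit by (simp add: derivable_in_premises)
next
  case (step j)
  let ?Cs = "insert (mk_pbc [(1, Pos (T (Suc j)))] 1)
    (\<Union>j\<in>{Suc j..<k}. {mk_pbc [(1, Neg (S j)), (1, q (j + 1)), (1, neg_lit (p (j + 1)))] 1})"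
  have step_j: "derivable_in (P \<union> ?Cs) 11
      {mk_pbc [(1, Pos (T j))] 1, mk_pbc [(1, Neg (S j)), (1, q (j + 1)), (1, neg_lit (p (j + 1)))] 1}"
    by (rule derivable_in_t_step) (use circ step \<open>1 \<le> i\<close> in auto)
  have split: "{j..<k} = insert j {Suc j..<k}"
    using step.hyps by auto
  from derivable_in_trans[OF step.IH step_j] show ?case
    by (rule derivable_in_mono) (use step.hyps in \<open>auto simp: split\<close>)
qed

lemma derivable_in_t_clauses:
  assumes "1 \<le> k"
  shows "derivable_in (circuit_constraints k p q \<union> {mk_pbc [(1, Pos (T k))] 1}) (11 * k)
    (insert (mk_pbc [(1, q 1), (1, neg_lit (p 1))] 1)
      (\<Union>j\<in>{1..k-1}. {mk_pbc [(1, Neg (S j)), (1, q (j + 1)), (1, neg_lit (p (j + 1)))] 1}))"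
proof -
  let ?P = "circuit_constraints k p q \<union> {mk_pbc [(1, Pos (T k))] 1}"
  let ?Ts = "\<Union>j\<in>{1..<k}. {mk_pbc [(1, Neg (S j)), (1, q (j + 1)), (1, neg_lit (p (j + 1)))] 1}"
  have t_chain: "derivable_in ?P (11 * (k - 1)) (insert (mk_pbc [(1, Pos (T 1))] 1) ?Ts)"
    by (rule derivable_in_t_chain) (use \<open>1 \<le> k\<close> in \<open>auto simp: circuit_constraints_def\<close>)
  have "mk_pbc [(1, Neg (T 1)), (1, q 1), (1, neg_lit (p 1))] 1 \<in> ?P"
    by (simp add: circuit_constraints_def)
  then have "derivable_in (?P \<union> {mk_pbc [(1, Pos (T 1))] 1}) 2 {mk_pbc [(1, q 1), (1, neg_lit (p 1))] 1}"
    by (rule derivable_in_cancel[OF UnI1 UnI1[OF UnI2[OF singletonI]], where c = 1]) simp_all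
  then have last: "derivable_in (?P \<union> insert (mk_pbc [(1, Pos (T 1))] 1) ?Ts) 2
      {mk_pbc [(1, q 1), (1, neg_lit (p 1))] 1}"
    by (rule derivable_in_mono) auto
  have t_range: "{1..k-1} = {1..<k}"
    using \<open>1 \<le> k\<close> by auto
  from derivable_in_trans[OF t_chain last] show ?thesis
    by (rule derivable_in_mono) (unfold t_range, use \<open>1 \<le> k\<close> in auto)
qed

lemma derivable_in_sb_clauses:
  assumes "1 \<le> k"
    and p_vars: "\<And>j. lit_var (p j) \<in> range X" and q_vars: "\<And>j. lit_var (q j) \<in> range X"
  shows "derivable_in (circuit_constraints k p q \<union> {mk_pbc [(1, Pos (T k))] 1}) (17 * k) (sb_clauses k p q)"
proof -
  let ?P = "circuit_constraints k p q \<union> {mk_pbc [(1, Pos (T k))] 1}"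
  have s_first: "derivable_in ?P 6
      {mk_pbc [(1, Pos (S 1)), (1, neg_lit (p 1))] 1, mk_pbc [(1, Pos (S 1)), (1, q 1)] 1}"
    using derivable_in_halve_pair[of "[Pos (S 1)]" "neg_lit (p 1)" "q 1" ?P] p_vars[of 1] q_vars[of 1]
    by (auto simp: circuit_constraints_def)
  have "derivable_in ?P 6
      {mk_pbc [(1, Pos (S (j + 1))), (1, Neg (S j)), (1, neg_lit (p (j + 1)))] 1,
       mk_pbc [(1, Pos (S (j + 1))), (1, Neg (S j)), (1, q (j + 1))] 1}" if "j \<in> {1..k-2}" for j
  proof -
    have "mk_pbc [(2, Pos (S (j + 1))), (2, Neg (S j)), (1, neg_lit (p (j + 1))), (1, q (j + 1))] 2
        \<in> circuit_constraints k p q"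
      using that unfolding circuit_constraints_def by blast
    then show ?thesis
      using derivable_in_halve_pair[of "[Pos (S (j + 1)), Neg (S j)]" "neg_lit (p (j + 1))" "q (j + 1)" ?P]
        p_vars[of "j + 1"] q_vars[of "j + 1"] by auto
  qed
  then have s_rest: "derivable_in ?P (6 * (k - 2))
      (\<Union>j\<in>{1..k-2}. {mk_pbc [(1, Pos (S (j + 1))), (1, Neg (S j)), (1, neg_lit (p (j + 1)))] 1,
       mk_pbc [(1, Pos (S (j + 1))), (1, Neg (S j)), (1, q (j + 1))] 1})"
    using derivable_in_UN[of "{1..k-2}" ?P 6] by (simp add: mult.commute)
  from derivable_in_Un[OF derivable_in_Un[OF s_first s_rest] derivable_in_t_clauses[OF \<open>1 \<le> k\<close>]]
  show ?thesis
    by (rule derivable_in_mono) (unfold sb_clauses_def, use \<open>1 \<le> k\<close> in auto)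
qed

theorem lemma17:
  "\<exists>c::nat. \<forall>(F :: nat pbc set) (\<sigma> :: nat lit \<Rightarrow> nat lit).
     pb_formula F \<longrightarrow> is_symmetry \<sigma> F \<longrightarrow> sym_support \<sigma> \<noteq> {} \<longrightarrow>
     (let xs = sorted_list_of_set (sym_support \<sigma>);
          k = length xs;
          p = (\<lambda>j. Pos (X (xs ! (j - 1))));
          q = (\<lambda>j. map_lit X (\<sigma> (Pos (xs ! (j - 1)))));
          P = circuit_constraints k p q \<union> {mk_pbc [(1, Pos (T k))] 1}
      in \<exists>Ds. valid_deriv P Ds \<and> length Ds \<le> c * k \<and> sb_clauses k p q \<subseteq> P \<union> set Ds)"
  unfolding Let_def derivable_in_def[symmetric]
proof (intro exI[of _ 17] allI impI derivable_in_sb_clauses)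
  fix F :: "nat pbc set" and \<sigma> :: "nat lit \<Rightarrow> nat lit"
  assume "is_symmetry \<sigma> F" and "sym_support \<sigma> \<noteq> {}"
  then show "1 \<le> length (sorted_list_of_set (sym_support \<sigma>))"
    by (simp add: is_symmetry_def Suc_le_eq card_gt_0_iff)
qed auto

end
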